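(* Let $m\ge3$, $C$ a set of $m$ candidates, $T$ the set of all $m!$ strict rankings of $C$, $w=(w_1,\dots,w_m)$ with $1=w_1\ge\cdots\ge w_m=0$, and $\sigma_t(\alpha)=w_i$ where $i$ is the position of $\alpha$ in $t\in T$. Let $(N_t)_{t\in T}$ be nonnegative integers and $|\alpha|=\sum_tN_t\sigma_t(\alpha)$. Suppose $|a|>|\alpha|$ for all $\alpha\ne a$, and $b\ne a$ satisfies $|b|\ge|\alpha|$ for all $\alpha\ne a$. Let $\bar T_{ba}$ be the set of types ranking $b$ above $a$, $T_b$ the set of types ranking $b$ first, $T_i$ ($1\le i\le m-1$) the set of types ranking $b$ in position $i$ and $a$ in position $i+1$, and $T_{ba}=\bigcup_{i=1}^{m-1}T_i$. Let $Q_3(b)$ be the optimal value (or $+\infty$ if infeasible) of: minimize $\sum_{t\in\bar T_{ba}}x_t$ subject to $$\sum_{t\in T_b}y_t(1-\sigma_t(\alpha))-\sum_{t\in\bar T_{ba}}x_t(\sigma_t(b)-\sigma_t(\alpha))\ge|\alpha|-|b|\quad\forall\alpha\ne b,$$ $\sum_{t\in T_b}y_t=\sum_{t\in\bar T_{ba}}x_t$, $x_t\ge0$, $y_t\ge0$ (real variables). Let $Q$ be the optimal value (or $+\infty$ if infeasible) of the same linear program with $\bar T_{ba}$ replaced by $T_{ba}$ throughout (in the objective, in the constraints, and in the index set of the variables $x_t$). Then $Q_3(b)=Q$. *)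

theory Defs
  imports Complex_Main "HOL-Library.Extended_Real"
begin

text \<open>Candidates are the elements of a finite type 'c, so m = card (UNIV::'c set).
  A ranking (type) t is a bijection from the candidates onto positions
  {0..<m}; the (1-based) position of alpha in t is t alpha + 1.\<close>

definition rankings :: "('c::finite \<Rightarrow> nat) set" where
  "rankings = {t. bij_betw t UNIV {0..<card (UNIV::'c set)}}"

definition sigma :: "(nat \<Rightarrow> real) \<Rightarrow> ('c::finite \<Rightarrow> nat) \<Rightarrow> 'c \<Rightarrow> real" where
  "sigma w t \<alpha> = w (t \<alpha> + 1)"

definition score :: "(nat \<Rightarrow> real) \<Rightarrow> (('c::finite \<Rightarrow> nat) \<Rightarrow> nat) \<Rightarrow> 'c \<Rightarrow> real" where
  "score w N \<alpha> = (\<Sum>t\<in>rankings. real (N t) * sigma w t \<alpha>)"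

definition T_first :: "'c::finite \<Rightarrow> ('c \<Rightarrow> nat) set" where
  "T_first b = {t\<in>rankings. t b = 0}"

definition T_above :: "'c::finite \<Rightarrow> 'c \<Rightarrow> ('c \<Rightarrow> nat) set" where
  "T_above b a = {t\<in>rankings. t b < t a}"

definition T_i :: "'c::finite \<Rightarrow> 'c \<Rightarrow> nat \<Rightarrow> ('c \<Rightarrow> nat) set" where
  "T_i b a i = {t\<in>rankings. t b + 1 = i \<and> t a + 1 = i + 1}"

definition T_adj :: "'c::finite \<Rightarrow> 'c \<Rightarrow> ('c \<Rightarrow> nat) set" where
  "T_adj b a = (\<Union>i\<in>{1..card (UNIV::'c set) - 1}. T_i b a i)"

text \<open>Optimal value (in ereal; +infinity if infeasible) of the LP:
  minimize sum_{t in S} x_t subject to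
  sum_{t in T_b} y_t (1 - sigma_t(alpha)) - sum_{t in S} x_t (sigma_t(b) - sigma_t(alpha))
     >= |alpha| - |b|   for all alpha /= b,
  sum_{t in T_b} y_t = sum_{t in S} x_t, x >= 0 on S, y >= 0 on T_b.
  Variables are real functions; only values on S and T_b matter.\<close>
definition lp_value ::
  "(nat \<Rightarrow> real) \<Rightarrow> (('c::finite \<Rightarrow> nat) \<Rightarrow> nat) \<Rightarrow> 'c \<Rightarrow> ('c \<Rightarrow> nat) set \<Rightarrow> ereal" where
  "lp_value w N b S = Inf {ereal (\<Sum>t\<in>S. x t) | x y.
      (\<forall>t\<in>S. x t \<ge> 0) \<and> (\<forall>t\<in>T_first b. y t \<ge> 0) \<and>
      (\<forall>\<alpha>. \<alpha> \<noteq> b \<longrightarrow>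
         (\<Sum>t\<in>T_first b. y t * (1 - sigma w t \<alpha>))
         - (\<Sum>t\<in>S. x t * (sigma w t b - sigma w t \<alpha>))
         \<ge> score w N \<alpha> - score w N b) \<and>
      (\<Sum>t\<in>T_first b. y t) = (\<Sum>t\<in>S. x t)}"

end

theory Submission
  imports Defs
begin

text \<open>A feasible point of the program over types ranking b above a is transported to one over
  the types ranking b immediately above a: in every such type slide b down to the slot just
  ahead of a, moving the candidates it passes up by one, and put the weight x_t on the new type.
  Since w is non-increasing, this lowers sigma_t(b) and raises sigma_t(alpha) for every other
  alpha, so each constraint only gets slacker, while the total x-mass (the objective) and the
  y-variables are unchanged. Conversely, the adjacent types are among those ranking b above a,
  so a feasible point for them extends by zero (the same transport along the inclusion).
  Thus both programs have the same attainable objective values; only the monotonicity of w and b \<noteq> a are used.\<close>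

lemma in_rankings_iff:
  "t \<in> (rankings :: ('c::finite \<Rightarrow> nat) set) \<longleftrightarrow> inj t \<and> (\<forall>c. t c < card (UNIV::'c set))"
proof
  assume "inj t \<and> (\<forall>c. t c < card (UNIV::'c set))"
  then have "inj t" and "range t \<subseteq> {0..<card (UNIV::'c set)}" by auto
  moreover from \<open>inj t\<close> have "card (range t) = card {0..<card (UNIV::'c set)}"
    by (simp add: card_image)
  ultimately show "t \<in> rankings"
    unfolding rankings_def bij_betw_def by (simp add: card_subset_eq)
qed (auto simp: rankings_def bij_betw_def)

lemma finite_rankings: "finite (rankings :: ('c::finite \<Rightarrow> nat) set)"
proof (rule finite_subset)
  let ?m = "card (UNIV::'c set)"
  show "rankings \<subseteq> {t::'c \<Rightarrow> nat. \<forall>c. (c \<in> UNIV \<longrightarrow> t c \<in> {0..<?m}) \<and> (c \<notin> UNIV \<longrightarrow> t c = 0)}"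
    by (auto simp: in_rankings_iff)
qed (rule finite_set_of_finite_funs; simp)

lemma T_adj_subset_T_above: "T_adj b a \<subseteq> T_above b a"
  unfolding T_adj_def T_i_def T_above_def by auto

lemma finite_T_above: "finite (T_above b a)"
  using finite_rankings by (rule rev_finite_subset) (auto simp: T_above_def)

definition move_before :: "'c \<Rightarrow> 'c \<Rightarrow> ('c \<Rightarrow> nat) \<Rightarrow> 'c \<Rightarrow> nat" where
  "move_before b a t =
     (\<lambda>c. if c = b then t a - 1 else if t b < t c \<and> t c < t a then t c - 1 else t c)"

lemma move_before_in_rankings:
  fixes t :: "'c::finite \<Rightarrow> nat"
  assumes t: "t \<in> T_above b a"
  shows "move_before b a t \<in> rankings"
proof -
  have inj: "inj t" and bound: "\<And>c. t c < card (UNIV::'c set)" and "t b < t a"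
    using t by (auto simp: T_above_def in_rankings_iff)
  have "inj (move_before b a t)"
  proof (rule injI)
    fix x y assume "move_before b a t x = move_before b a t y"
    moreover have "t x = t y \<longleftrightarrow> x = y" "t x = t b \<longleftrightarrow> x = b" "t y = t b \<longleftrightarrow> y = b"
      using inj by (auto dest: injD)
    ultimately show "x = y"
      using \<open>t b < t a\<close> unfolding move_before_def by (auto split: if_splits)
  qed
  moreover have "move_before b a t c < card (UNIV::'c set)" for c
    using bound[of c] bound[of a] by (auto simp: move_before_def)
  ultimately show ?thesis by (simp add: in_rankings_iff)
qed

lemma move_before_in_T_adj:
  fixes t :: "'c::finite \<Rightarrow> nat"
  assumes t: "t \<in> T_above b a" and "b \<noteq> a"
  shows "move_before b a t \<in> T_adj b a"
proof -
  have "t b < t a" and "t a < card (UNIV::'c set)"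
    using t by (auto simp: T_above_def in_rankings_iff)
  then have "t a \<in> {1..card (UNIV::'c set) - 1}" by auto
  moreover have "move_before b a t \<in> T_i b a (t a)"
    using move_before_in_rankings[OF t] \<open>t b < t a\<close> \<open>b \<noteq> a\<close>
    by (auto simp: T_i_def move_before_def)
  ultimately show ?thesis unfolding T_adj_def by blast
qed

lemma sigma_gap_move_before_le:
  fixes w :: "nat \<Rightarrow> real" and t :: "'c::finite \<Rightarrow> nat"
  assumes t: "t \<in> T_above b a" and "\<alpha> \<noteq> b"
    and w_antimono: "\<And>i j. 1 \<le> i \<Longrightarrow> i \<le> j \<Longrightarrow> j \<le> card (UNIV::'c set) \<Longrightarrow> w j \<le> w i"
  shows "sigma w (move_before b a t) b - sigma w (move_before b a t) \<alpha> \<le> sigma w t b - sigma w t \<alpha>"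
proof -
  have "t b < t a" and bound: "\<And>c. t c < card (UNIV::'c set)"
    using t by (auto simp: T_above_def in_rankings_iff)
  have "sigma w (move_before b a t) b \<le> sigma w t b"
    using \<open>t b < t a\<close> bound[of a] by (auto simp: sigma_def move_before_def intro!: w_antimono)
  moreover have "sigma w t \<alpha> \<le> sigma w (move_before b a t) \<alpha>"
    using \<open>\<alpha> \<noteq> b\<close> bound[of \<alpha>] by (auto simp: sigma_def move_before_def intro!: w_antimono)
  ultimately show ?thesis by linarith
qed

definition lp_feasible ::
  "(nat \<Rightarrow> real) \<Rightarrow> (('c::finite \<Rightarrow> nat) \<Rightarrow> nat) \<Rightarrow> 'c \<Rightarrow> ('c \<Rightarrow> nat) set
     \<Rightarrow> (('c \<Rightarrow> nat) \<Rightarrow> real) \<Rightarrow> (('c \<Rightarrow> nat) \<Rightarrow> real) \<Rightarrow> bool" where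
  "lp_feasible w N b S x y \<longleftrightarrow>
     (\<forall>t\<in>S. x t \<ge> 0) \<and> (\<forall>t\<in>T_first b. y t \<ge> 0) \<and>
     (\<forall>\<alpha>. \<alpha> \<noteq> b \<longrightarrow>
        (\<Sum>t\<in>T_first b. y t * (1 - sigma w t \<alpha>)) - (\<Sum>t\<in>S. x t * (sigma w t b - sigma w t \<alpha>))
        \<ge> score w N \<alpha> - score w N b) \<and>
     (\<Sum>t\<in>T_first b. y t) = (\<Sum>t\<in>S. x t)"

lemma lp_value_eq_Inf_feasible:
  "lp_value w N b S = Inf {ereal (\<Sum>t\<in>S. x t) | x y. lp_feasible w N b S x y}"
  by (simp add: lp_value_def lp_feasible_def)

lemma sum_fibres_mult:
  fixes x c :: "'a \<Rightarrow> 'b::comm_semiring_1"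
  assumes "finite S" "finite S'" "f ` S \<subseteq> S'"
  shows "(\<Sum>t'\<in>S'. (\<Sum>t\<in>{t\<in>S. f t = t'}. x t) * c t') = (\<Sum>t\<in>S. x t * c (f t))"
proof -
  have "(\<Sum>t'\<in>S'. (\<Sum>t\<in>{t\<in>S. f t = t'}. x t) * c t')
      = (\<Sum>t'\<in>S'. \<Sum>t\<in>{t\<in>S. f t = t'}. x t * c (f t))"
    by (simp add: sum_distrib_right)
  also have "\<dots> = (\<Sum>t\<in>S. x t * c (f t))"
    using assms by (rule sum.group)
  finally show ?thesis .
qed

lemma lp_feasible_pushforward:
  fixes f :: "('c::finite \<Rightarrow> nat) \<Rightarrow> ('c \<Rightarrow> nat)" and S S' x
  defines "x' \<equiv> \<lambda>t'. \<Sum>t\<in>{t\<in>S. f t = t'}. x t"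
  assumes "finite S" "finite S'" "f ` S \<subseteq> S'"
    and gap: "\<And>t \<alpha>. t \<in> S \<Longrightarrow> \<alpha> \<noteq> b \<Longrightarrow>
                 sigma w (f t) b - sigma w (f t) \<alpha> \<le> sigma w t b - sigma w t \<alpha>"
    and feasible: "lp_feasible w N b S x y"
  shows "lp_feasible w N b S' x' y" and "(\<Sum>t\<in>S'. x' t) = (\<Sum>t\<in>S. x t)"
proof -
  have fibres: "(\<Sum>t'\<in>S'. x' t' * c t') = (\<Sum>t\<in>S. x t * c (f t))" for c
    unfolding x'_def using assms(2-4) by (rule sum_fibres_mult)
  from fibres[of "\<lambda>_. 1"] show mass: "(\<Sum>t\<in>S'. x' t) = (\<Sum>t\<in>S. x t)" by simp
  have x_nonneg: "\<forall>t\<in>S. x t \<ge> 0"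
    using feasible by (simp add: lp_feasible_def)
  have "(\<Sum>t'\<in>S'. x' t' * (sigma w t' b - sigma w t' \<alpha>))
        \<le> (\<Sum>t\<in>S. x t * (sigma w t b - sigma w t \<alpha>))" if "\<alpha> \<noteq> b" for \<alpha>
    unfolding fibres using x_nonneg gap[OF _ that] by (auto intro!: sum_mono mult_left_mono)
  then have "(\<Sum>t\<in>T_first b. y t * (1 - sigma w t \<alpha>)) - (\<Sum>t'\<in>S'. x' t' * (sigma w t' b - sigma w t' \<alpha>))
        \<ge> score w N \<alpha> - score w N b" if "\<alpha> \<noteq> b" for \<alpha>
    using feasible that unfolding lp_feasible_def by (meson diff_left_mono order_trans)
  moreover have "\<forall>t'\<in>S'. x' t' \<ge> 0"
    using x_nonneg by (auto simp: x'_def intro!: sum_nonneg)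
  ultimately show "lp_feasible w N b S' x' y"
    using feasible mass by (simp add: lp_feasible_def)
qed

lemma lp_value_le_pushforward:
  fixes f :: "('c::finite \<Rightarrow> nat) \<Rightarrow> ('c \<Rightarrow> nat)"
  assumes "finite S" "finite S'" "f ` S \<subseteq> S'"
    and "\<And>t \<alpha>. t \<in> S \<Longrightarrow> \<alpha> \<noteq> b \<Longrightarrow>
           sigma w (f t) b - sigma w (f t) \<alpha> \<le> sigma w t b - sigma w t \<alpha>"
  shows "lp_value w N b S' \<le> lp_value w N b S"
  unfolding lp_value_eq_Inf_feasible
proof (rule Inf_mono)
  fix v assume "v \<in> {ereal (\<Sum>t\<in>S. x t) | x y. lp_feasible w N b S x y}"
  then obtain x y where "v = ereal (\<Sum>t\<in>S. x t)" and "lp_feasible w N b S x y" by blast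
  with lp_feasible_pushforward[OF assms this(2)]
  show "\<exists>v'\<in>{ereal (\<Sum>t\<in>S'. x t) | x y. lp_feasible w N b S' x y}. v' \<le> v"
    by (metis (mono_tags, lifting) mem_Collect_eq order_refl)
qed

theorem proposition8:
  fixes w :: "nat \<Rightarrow> real" and N :: "('c::finite \<Rightarrow> nat) \<Rightarrow> nat" and a b :: 'c
  assumes m3: "card (UNIV::'c set) \<ge> 3"
    and w1: "w 1 = 1" and wm: "w (card (UNIV::'c set)) = 0"
    and wmono: "\<And>i j. 1 \<le> i \<Longrightarrow> i \<le> j \<Longrightarrow> j \<le> card (UNIV::'c set) \<Longrightarrow> w j \<le> w i"
    and a_win: "\<And>\<alpha>. \<alpha> \<noteq> a \<Longrightarrow> score w N a > score w N \<alpha>"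
    and ba: "b \<noteq> a"
    and b_second: "\<And>\<alpha>. \<alpha> \<noteq> a \<Longrightarrow> score w N b \<ge> score w N \<alpha>"
  shows "lp_value w N b (T_above b a) = lp_value w N b (T_adj b a)"
proof (rule antisym)
  have finite_T_adj: "finite (T_adj b a)"
    using finite_T_above T_adj_subset_T_above by (rule finite_subset[rotated])
  show "lp_value w N b (T_above b a) \<le> lp_value w N b (T_adj b a)"
    using finite_T_adj finite_T_above
    by (rule lp_value_le_pushforward[where f = id]) (use T_adj_subset_T_above in auto)
  show "lp_value w N b (T_adj b a) \<le> lp_value w N b (T_above b a)"
    using finite_T_above finite_T_adj
    by (rule lp_value_le_pushforward[where f = "move_before b a"])
       (auto intro: move_before_in_T_adj[OF _ ba] sigma_gap_move_before_le[OF _ _ wmono])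
qed

end
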